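(* Let $G$ be a finite group and $E$ a $k^G$-comodule algebra, and let $T$ be a $(k^G,E)$-Hopf torsor. Then $T^\times$ is stable under the $G$-action on $T$ and, with this left $G$-action and the right action of $E^\times$ by multiplication, $T^\times$ is a $(G,E^\times)$-group torsor.
   Context: $k^G$: Hopf algebra with $k$-basis $\{\delta_g\}_{g\in G}$, $\delta_g\delta_{g'}=\partial_{g,g'}\delta_g$, unit $\sum_g\delta_g$, $\Delta(\delta_g)=\sum_{ab=g}\delta_a\otimes\delta_b$, $\varepsilon(\delta_g)=\partial_{g,e}$, $\sigma(\delta_g)=\delta_{g^{-1}}$. An $H$-comodule algebra is an algebra $E$ with coaction $\Delta_E$ an algebra morphism; $\Delta_E(x)=\sum_g{}^gx\otimes\delta_g$ defines a $G$-action on $E$, hence on $E^\times$. An $(H,E)$-Hopf module is a right $E$-module $T$ with $H$-coaction $\Delta_T$ such that $\Delta_T(tx)=\Delta_T(t)\Delta_E(x)$; for $H=k^G$, $\Delta_T(u)=\sum_g{}^gu\otimes\delta_g$ defines a $G$-action on $T$. $\vartheta_u(x)=ux$, $T^\times=\{u\in T:\vartheta_u:E\to T\text{ bijective}\}$ (similarly for $T\otimes H$ over $E\otimes H$), $T^\bullet=\{u\in T^\times:\Delta_T(u)\in(T\otimes H)^\times\}$; an $(H,E)$-Hopf torsor is a Hopf module with $T^\bullet\neq\emptyset$. For a group $G$ acting on a group $A$, a $(G,A)$-group torsor is a nonempty left $G$-set $P$ with a right $A$-action such that ${}^g(pa)={}^gp\,{}^ga$ and $A$ acts simply transitively on $P$.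 *)

theory Defs
  imports "HOL.Modules" "HOL-Algebra.Group"
begin

text \<open>Since G is finite, E \<otimes> k^G is identified with the functions carrier G \<rightarrow> E
via  sum_g x_g \<otimes> delta_g  \<mapsto>  (g \<mapsto> x_g).  Thus a k^G-coaction on E is
a map DE :: 'e \<Rightarrow> 'g \<Rightarrow> 'e where DE x g is the coefficient of delta_g
in DE(x), i.e. DE x g = ^g x.  The product on E \<otimes> k^G (and the action of
E \<otimes> k^G on T \<otimes> k^G) is componentwise since delta_g delta_h = [g=h] delta_g.\<close>

definition k_algebra :: "('k::field \<Rightarrow> 'e::ring_1 \<Rightarrow> 'e) \<Rightarrow> bool" where
  "k_algebra sc \<longleftrightarrow> module sc \<and>
     (\<forall>c x y. sc c (x * y) = sc c x * y \<and> sc c (x * y) = x * sc c y)"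

definition kG_comodule ::
  "('g, 'b) monoid_scheme \<Rightarrow> ('k::field \<Rightarrow> 'v::ab_group_add \<Rightarrow> 'v) \<Rightarrow> ('v \<Rightarrow> 'g \<Rightarrow> 'v) \<Rightarrow> bool" where
  "kG_comodule G sc D \<longleftrightarrow> module sc \<and>
     (\<forall>g\<in>carrier G. \<forall>x y. D (x + y) g = D x g + D y g) \<and>
     (\<forall>g\<in>carrier G. \<forall>c x. D (sc c x) g = sc c (D x g)) \<and>
     (\<forall>x. \<forall>a\<in>carrier G. \<forall>b\<in>carrier G. D (D x b) a = D x (a \<otimes>\<^bsub>G\<^esub> b)) \<and>
     (\<forall>x. D x \<one>\<^bsub>G\<^esub> = x)"

text \<open>k^G-comodule algebra: k-algebra with a coaction which is an algebra morphism
E \<rightarrow> E \<otimes> k^G (unit of E \<otimes> k^G is 1 \<otimes> sum_g delta_g).\<close>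
definition kG_comodule_algebra ::
  "('g, 'b) monoid_scheme \<Rightarrow> ('k::field \<Rightarrow> 'e::ring_1 \<Rightarrow> 'e) \<Rightarrow> ('e \<Rightarrow> 'g \<Rightarrow> 'e) \<Rightarrow> bool" where
  "kG_comodule_algebra G scE DE \<longleftrightarrow> k_algebra scE \<and> kG_comodule G scE DE \<and>
     (\<forall>g\<in>carrier G. \<forall>x y. DE (x * y) g = DE x g * DE y g) \<and>
     (\<forall>g\<in>carrier G. DE 1 g = 1)"

definition right_module ::
  "('k::field \<Rightarrow> 'e::ring_1 \<Rightarrow> 'e) \<Rightarrow> ('k \<Rightarrow> 't::ab_group_add \<Rightarrow> 't) \<Rightarrow> ('t \<Rightarrow> 'e \<Rightarrow> 't) \<Rightarrow> bool" where
  "right_module scE scT m \<longleftrightarrow> module scT \<and>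
     (\<forall>t u x. m (t + u) x = m t x + m u x) \<and>
     (\<forall>t x y. m t (x + y) = m t x + m t y) \<and>
     (\<forall>t x y. m (m t x) y = m t (x * y)) \<and>
     (\<forall>t. m t 1 = t) \<and>
     (\<forall>c t x. scT c (m t x) = m (scT c t) x \<and> scT c (m t x) = m t (scE c x))"

definition kG_Hopf_module ::
  "('g, 'b) monoid_scheme \<Rightarrow> ('k::field \<Rightarrow> 'e::ring_1 \<Rightarrow> 'e) \<Rightarrow> ('e \<Rightarrow> 'g \<Rightarrow> 'e) \<Rightarrow>
   ('k \<Rightarrow> 't::ab_group_add \<Rightarrow> 't) \<Rightarrow> ('t \<Rightarrow> 'e \<Rightarrow> 't) \<Rightarrow> ('t \<Rightarrow> 'g \<Rightarrow> 't) \<Rightarrow> bool" where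
  "kG_Hopf_module G scE DE scT m DT \<longleftrightarrow> right_module scE scT m \<and> kG_comodule G scT DT \<and>
     (\<forall>g\<in>carrier G. \<forall>t x. DT (m t x) g = m (DT t g) (DE x g))"

definition invertibles :: "('t \<Rightarrow> 'e \<Rightarrow> 't) \<Rightarrow> 't set" where
  "invertibles m = {u. bij (\<lambda>x. m u x)}"

text \<open>(T \<otimes> k^G)^x, with T \<otimes> k^G and E \<otimes> k^G identified with extensional functions on carrier G with values in T, E.\<close>
definition invertibles_tensor ::
  "('g, 'b) monoid_scheme \<Rightarrow> ('t \<Rightarrow> 'e \<Rightarrow> 't) \<Rightarrow> ('g \<Rightarrow> 't) set" where
  "invertibles_tensor G m = {U \<in> carrier G \<rightarrow>\<^sub>E UNIV.
      bij_betw (\<lambda>f. \<lambda>g\<in>carrier G. m (U g) (f g)) (carrier G \<rightarrow>\<^sub>E UNIV) (carrier G \<rightarrow>\<^sub>E UNIV)}"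

definition bullet_elements ::
  "('g, 'b) monoid_scheme \<Rightarrow> ('t \<Rightarrow> 'e \<Rightarrow> 't) \<Rightarrow> ('t \<Rightarrow> 'g \<Rightarrow> 't) \<Rightarrow> 't set" where
  "bullet_elements G m DT =
     {u \<in> invertibles m. restrict (DT u) (carrier G) \<in> invertibles_tensor G m}"

definition kG_Hopf_torsor ::
  "('g, 'b) monoid_scheme \<Rightarrow> ('k::field \<Rightarrow> 'e::ring_1 \<Rightarrow> 'e) \<Rightarrow> ('e \<Rightarrow> 'g \<Rightarrow> 'e) \<Rightarrow>
   ('k \<Rightarrow> 't::ab_group_add \<Rightarrow> 't) \<Rightarrow> ('t \<Rightarrow> 'e \<Rightarrow> 't) \<Rightarrow> ('t \<Rightarrow> 'g \<Rightarrow> 't) \<Rightarrow> bool" where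
  "kG_Hopf_torsor G scE DE scT m DT \<longleftrightarrow> kG_Hopf_module G scE DE scT m DT \<and>
     bullet_elements G m DT \<noteq> {}"

definition ring_units :: "'e::ring_1 set" where
  "ring_units = {a. \<exists>b. a * b = 1 \<and> b * a = 1}"

definition units_group :: "'e::ring_1 monoid" where
  "units_group = \<lparr>carrier = ring_units, mult = (*), one = 1\<rparr>"

definition group_torsor ::
  "('g, 'b) monoid_scheme \<Rightarrow> ('a, 'c) monoid_scheme \<Rightarrow> ('g \<Rightarrow> 'a \<Rightarrow> 'a) \<Rightarrow>
   'p set \<Rightarrow> ('g \<Rightarrow> 'p \<Rightarrow> 'p) \<Rightarrow> ('p \<Rightarrow> 'a \<Rightarrow> 'p) \<Rightarrow> bool" where
  "group_torsor G A actA P actP ract \<longleftrightarrow>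
     group G \<and> group A \<and>
     (\<forall>g\<in>carrier G. \<forall>a\<in>carrier A. actA g a \<in> carrier A) \<and>
     (\<forall>a\<in>carrier A. actA \<one>\<^bsub>G\<^esub> a = a) \<and>
     (\<forall>g\<in>carrier G. \<forall>h\<in>carrier G. \<forall>a\<in>carrier A. actA g (actA h a) = actA (g \<otimes>\<^bsub>G\<^esub> h) a) \<and>
     (\<forall>g\<in>carrier G. \<forall>a\<in>carrier A. \<forall>b\<in>carrier A.
        actA g (a \<otimes>\<^bsub>A\<^esub> b) = actA g a \<otimes>\<^bsub>A\<^esub> actA g b) \<and>
     P \<noteq> {} \<and>
     (\<forall>g\<in>carrier G. \<forall>p\<in>P. actP g p \<in> P) \<and>
     (\<forall>p\<in>P. actP \<one>\<^bsub>G\<^esub> p = p) \<and>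
     (\<forall>g\<in>carrier G. \<forall>h\<in>carrier G. \<forall>p\<in>P. actP g (actP h p) = actP (g \<otimes>\<^bsub>G\<^esub> h) p) \<and>
     (\<forall>p\<in>P. \<forall>a\<in>carrier A. ract p a \<in> P) \<and>
     (\<forall>p\<in>P. ract p \<one>\<^bsub>A\<^esub> = p) \<and>
     (\<forall>p\<in>P. \<forall>a\<in>carrier A. \<forall>b\<in>carrier A. ract (ract p a) b = ract p (a \<otimes>\<^bsub>A\<^esub> b)) \<and>
     (\<forall>g\<in>carrier G. \<forall>p\<in>P. \<forall>a\<in>carrier A. actP g (ract p a) = ract (actP g p) (actA g a)) \<and>
     (\<forall>p\<in>P. \<forall>q\<in>P. \<exists>!a. a \<in> carrier A \<and> ract p a = q)"

end

theory Submission
  imports Defs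
begin

text \<open>
  For a finite group G, a k^G-coaction is the same thing as a G-action
  g \<mapsto> (x \<mapsto> D x g), and for a comodule algebra this action is by ring automorphisms,
  so it restricts to an action on the unit group E^x. An element u of a Hopf module T
  is invertible iff m u : E \<rightarrow> T is bijective; the Hopf-module identity
  ^g(u x) = ^g u ^g x writes m (^g u) as the composite  (^g \<cdot>) \<circ> m u \<circ> (^(g\<inverse>) \<cdot>)
  of three bijections, which gives stability of T^x under G. Right multiplication by
  a unit preserves T^x, and for p, q \<in> T^x the unique preimage a of q under m p is a
  unit (its inverse is the preimage of p under m q), which gives simple transitivity.
\<close>

lemma units_group_is_group: "group (units_group :: 'e::ring_1 monoid)"
proof (rule groupI)
  fix x y :: 'e
  assume "x \<in> carrier units_group" "y \<in> carrier units_group"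
  then obtain x' y' where "x * x' = 1" "x' * x = 1" "y * y' = 1" "y' * y = 1"
    by (auto simp: units_group_def ring_units_def)
  then have "(x * y) * (y' * x') = 1" "(y' * x') * (x * y) = 1"
    by (metis mult.assoc mult_1_left)+
  then show "x \<otimes>\<^bsub>units_group\<^esub> y \<in> carrier units_group"
    by (auto simp: units_group_def ring_units_def)
next
  fix x :: 'e
  assume "x \<in> carrier units_group"
  then obtain x' where "x * x' = 1" "x' * x = 1"
    by (auto simp: units_group_def ring_units_def)
  then show "\<exists>y\<in>carrier units_group. y \<otimes>\<^bsub>units_group\<^esub> x = \<one>\<^bsub>units_group\<^esub>"
    by (auto simp: units_group_def ring_units_def)
qed (auto simp: units_group_def ring_units_def mult.assoc)

text \<open>Each group element acts bijectively on a k^G-comodule: the action of g\<inverse>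
  is a two-sided inverse, by coassociativity and the counit axiom.\<close>
lemma comodule_action_bij:
  assumes "group G" "kG_comodule G sc D" "g \<in> carrier G"
  shows "bij (\<lambda>x. D x g)"
proof -
  interpret G: group G by fact
  have co: "\<And>x a b. a \<in> carrier G \<Longrightarrow> b \<in> carrier G \<Longrightarrow> D (D x b) a = D x (a \<otimes>\<^bsub>G\<^esub> b)"
    and counit: "\<And>x. D x \<one>\<^bsub>G\<^esub> = x"
    using assms(2) by (auto simp: kG_comodule_def)
  show ?thesis
    by (rule o_bij[of "\<lambda>x. D x (inv\<^bsub>G\<^esub> g)"]) (auto simp: co counit assms(3))
qed

lemma comodule_algebra_action_units:
  assumes "kG_comodule_algebra G sc D" "g \<in> carrier G" "a \<in> ring_units"
  shows "D a g \<in> ring_units"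
proof -
  obtain b where ab: "a * b = 1" "b * a = 1" using assms(3) by (auto simp: ring_units_def)
  have hom: "\<And>x y. D (x * y) g = D x g * D y g" and unit: "D 1 g = 1"
    using assms(1,2) by (auto simp: kG_comodule_algebra_def)
  have "D a g * D b g = 1" "D b g * D a g = 1"
    using ab by (simp_all add: hom[symmetric] unit)
  then show ?thesis by (auto simp: ring_units_def)
qed

text \<open>T^x is stable under the G-action on a Hopf module:
  m (^g u) = (^g \<cdot>) \<circ> m u \<circ> (^(g\<inverse>) \<cdot>) is a composite of bijections.\<close>
lemma Hopf_module_invertibles_stable:
  assumes "group G" "kG_comodule_algebra G scE DE" "kG_Hopf_module G scE DE scT m DT"
    and "u \<in> invertibles m" "g \<in> carrier G"
  shows "DT u g \<in> invertibles m"
proof -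
  interpret G: group G by fact
  let ?h = "inv\<^bsub>G\<^esub> g"
  have E: "kG_comodule G scE DE" using assms(2) by (simp add: kG_comodule_algebra_def)
  have T: "kG_comodule G scT DT" and equiv: "\<And>t x. DT (m t x) g = m (DT t g) (DE x g)"
    using assms(3,5) by (auto simp: kG_Hopf_module_def)
  have co: "DE (DE x ?h) g = x" for x
    using E assms(5) by (simp add: kG_comodule_def)
  have "(\<lambda>x. m (DT u g) x) = (\<lambda>t. DT t g) \<circ> m u \<circ> (\<lambda>x. DE x ?h)"
    by (rule ext) (simp add: equiv co)
  moreover have "bij ((\<lambda>t. DT t g) \<circ> m u \<circ> (\<lambda>x. DE x ?h))"
    using assms(4,5) comodule_action_bij[OF assms(1) T] comodule_action_bij[OF assms(1) E]
    by (intro bij_comp) (auto simp: invertibles_def)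
  ultimately show ?thesis by (simp add: invertibles_def)
qed

text \<open>Right multiplication by a unit preserves T^x, since m (p a) = m p \<circ> (a \<cdot>).\<close>
lemma right_module_invertibles_mult_unit:
  assumes "right_module scE scT m" "p \<in> invertibles m" "a \<in> ring_units"
  shows "m p a \<in> invertibles m"
proof -
  obtain b where ab: "a * b = 1" "b * a = 1" using assms(3) by (auto simp: ring_units_def)
  have assoc: "\<And>t x y. m (m t x) y = m t (x * y)"
    using assms(1) by (simp add: right_module_def)
  have "bij (\<lambda>x. a * x)"
    by (rule o_bij[of "\<lambda>x. b * x"]) (auto simp: ab mult.assoc[symmetric])
  then have "bij (m p \<circ> (\<lambda>x. a * x))"
    using assms(2) by (intro bij_comp) (auto simp: invertibles_def)
  moreover have "(\<lambda>x. m (m p a) x) = m p \<circ> (\<lambda>x. a * x)" by (rule ext) (simp add: assoc)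
  ultimately show ?thesis by (simp add: invertibles_def)
qed

text \<open>E^x acts simply transitively on T^x: the unique a with p a = q is a unit,
  with inverse the unique b with q b = p.\<close>
lemma right_module_invertibles_simply_transitive:
  assumes "right_module scE scT m" "p \<in> invertibles m" "q \<in> invertibles m"
  shows "\<exists>!a. a \<in> ring_units \<and> m p a = q"
proof -
  have assoc: "\<And>t x y. m (m t x) y = m t (x * y)" and unit: "\<And>t. m t 1 = t"
    using assms(1) by (auto simp: right_module_def)
  have bp: "bij (m p)" and bq: "bij (m q)" using assms(2,3) by (auto simp: invertibles_def)
  obtain a where a: "m p a = q" using bp by (metis bij_pointE)
  obtain b where b: "m q b = p" using bq by (metis bij_pointE)
  have "m p (a * b) = m p 1" "m q (b * a) = m q 1"
    using a b by (simp_all add: assoc[symmetric] unit)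
  then have "a * b = 1" "b * a = 1"
    using bp bq by (simp_all add: bij_def inj_eq)
  then have "a \<in> ring_units" by (auto simp: ring_units_def)
  with a bp show ?thesis by (metis bij_def inj_eq)
qed

theorem proposition3p7:
  fixes G :: "('g, 'b) monoid_scheme"
    and scE :: "'k::field \<Rightarrow> 'e::ring_1 \<Rightarrow> 'e"
    and DE :: "'e \<Rightarrow> 'g \<Rightarrow> 'e"
    and scT :: "'k \<Rightarrow> 't::ab_group_add \<Rightarrow> 't"
    and m :: "'t \<Rightarrow> 'e \<Rightarrow> 't"
    and DT :: "'t \<Rightarrow> 'g \<Rightarrow> 't"
  assumes "group G" and "finite (carrier G)"
    and "kG_comodule_algebra G scE DE"
    and "kG_Hopf_torsor G scE DE scT m DT"
  shows "(\<forall>u\<in>invertibles m. \<forall>g\<in>carrier G. DT u g \<in> invertibles m) \<and>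
         group_torsor G units_group (\<lambda>g a. DE a g) (invertibles m) (\<lambda>g u. DT u g) m"
proof -
  have HM: "kG_Hopf_module G scE DE scT m DT"
    and nonempty: "invertibles m \<noteq> {}"
    using assms(4) by (auto simp: kG_Hopf_torsor_def bullet_elements_def)
  have RM: "right_module scE scT m" and T: "kG_comodule G scT DT"
    using HM by (auto simp: kG_Hopf_module_def)
  note stable = Hopf_module_invertibles_stable[OF assms(1,3) HM]
  note units_stable = comodule_algebra_action_units[OF assms(3)]
  note mult_unit = right_module_invertibles_mult_unit[OF RM]
  note transitive = right_module_invertibles_simply_transitive[OF RM]
  show ?thesis
    using assms(1,3) HM RM T nonempty units_group_is_group stable units_stable mult_unit transitive
    unfolding group_torsor_def
    by (simp add: units_group_def kG_comodule_algebra_def kG_comodule_def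
        kG_Hopf_module_def right_module_def)
qed

end
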